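(* There exist Archimedean vector lattices $X,Y$ and a disjointness preserving linear operator $T:X\to Y$ that does not satisfy condition $(\beta)$.
   Context: For a subset $A$ of a vector lattice $X$, $A^d=\{x\in X: |x|\wedge|a|=0 \text{ for all } a\in A\}$ and $A^{dd}=(A^d)^d$. For $a,b\in X$ we write $a\lhd b$ if $\{a\}^{dd}\subseteq\{b\}^{dd}$. A linear operator $T:X\to Y$ satisfies condition $(\beta)$ if $Ta\lhd Tb$ in $Y$ whenever $a\lhd b$ in $X$. A linear operator is disjointness preserving if it maps disjoint elements to disjoint elements. *)

theory Defs
  imports Main "HOL.Real"
begin

record 'a vlat =
  carrier :: "'a set"
  add :: "'a \<Rightarrow> 'a \<Rightarrow> 'a"
  zero :: 'a
  smult :: "real \<Rightarrow> 'a \<Rightarrow> 'a"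
  le :: "'a \<Rightarrow> 'a \<Rightarrow> bool"

definition vector_lattice :: "('a, 'b) vlat_scheme \<Rightarrow> bool" where
  "vector_lattice V \<longleftrightarrow>
     \<comment> \<open>real vector space\<close>
     zero V \<in> carrier V \<and>
     (\<forall>x\<in>carrier V. \<forall>y\<in>carrier V. add V x y \<in> carrier V) \<and>
     (\<forall>c. \<forall>x\<in>carrier V. smult V c x \<in> carrier V) \<and>
     (\<forall>x\<in>carrier V. \<forall>y\<in>carrier V. \<forall>z\<in>carrier V. add V (add V x y) z = add V x (add V y z)) \<and>
     (\<forall>x\<in>carrier V. \<forall>y\<in>carrier V. add V x y = add V y x) \<and>
     (\<forall>x\<in>carrier V. add V x (zero V) = x) \<and>
     (\<forall>x\<in>carrier V. \<exists>y\<in>carrier V. add V x y = zero V) \<and>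
     (\<forall>a b. \<forall>x\<in>carrier V. smult V a (smult V b x) = smult V (a * b) x) \<and>
     (\<forall>x\<in>carrier V. smult V 1 x = x) \<and>
     (\<forall>a b. \<forall>x\<in>carrier V. smult V (a + b) x = add V (smult V a x) (smult V b x)) \<and>
     (\<forall>a. \<forall>x\<in>carrier V. \<forall>y\<in>carrier V. smult V a (add V x y) = add V (smult V a x) (smult V a y)) \<and>
     \<comment> \<open>partial order\<close>
     (\<forall>x\<in>carrier V. le V x x) \<and>
     (\<forall>x\<in>carrier V. \<forall>y\<in>carrier V. le V x y \<and> le V y x \<longrightarrow> x = y) \<and>
     (\<forall>x\<in>carrier V. \<forall>y\<in>carrier V. \<forall>z\<in>carrier V. le V x y \<and> le V y z \<longrightarrow> le V x z) \<and>
     \<comment> \<open>compatibility with the vector structure\<close>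
     (\<forall>x\<in>carrier V. \<forall>y\<in>carrier V. \<forall>z\<in>carrier V. le V x y \<longrightarrow> le V (add V x z) (add V y z)) \<and>
     (\<forall>c. \<forall>x\<in>carrier V. \<forall>y\<in>carrier V. c \<ge> 0 \<and> le V x y \<longrightarrow> le V (smult V c x) (smult V c y)) \<and>
     \<comment> \<open>lattice: every pair has a supremum and an infimum\<close>
     (\<forall>x\<in>carrier V. \<forall>y\<in>carrier V. \<exists>s\<in>carrier V. le V x s \<and> le V y s \<and>
        (\<forall>z\<in>carrier V. le V x z \<and> le V y z \<longrightarrow> le V s z)) \<and>
     (\<forall>x\<in>carrier V. \<forall>y\<in>carrier V. \<exists>s\<in>carrier V. le V s x \<and> le V s y \<and>
        (\<forall>z\<in>carrier V. le V z x \<and> le V z y \<longrightarrow> le V z s))"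

definition vsup :: "('a, 'b) vlat_scheme \<Rightarrow> 'a \<Rightarrow> 'a \<Rightarrow> 'a" where
  "vsup V x y = (THE s. s \<in> carrier V \<and> le V x s \<and> le V y s \<and>
      (\<forall>z\<in>carrier V. le V x z \<and> le V y z \<longrightarrow> le V s z))"

definition vinf :: "('a, 'b) vlat_scheme \<Rightarrow> 'a \<Rightarrow> 'a \<Rightarrow> 'a" where
  "vinf V x y = (THE s. s \<in> carrier V \<and> le V s x \<and> le V s y \<and>
      (\<forall>z\<in>carrier V. le V z x \<and> le V z y \<longrightarrow> le V z s))"

definition vabs :: "('a, 'b) vlat_scheme \<Rightarrow> 'a \<Rightarrow> 'a" where
  "vabs V x = vsup V x (smult V (-1) x)"

definition vdisjoint :: "('a, 'b) vlat_scheme \<Rightarrow> 'a \<Rightarrow> 'a \<Rightarrow> bool" where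
  "vdisjoint V x y \<longleftrightarrow> vinf V (vabs V x) (vabs V y) = zero V"

definition dcompl :: "('a, 'b) vlat_scheme \<Rightarrow> 'a set \<Rightarrow> 'a set" where
  "dcompl V A = {x \<in> carrier V. \<forall>a\<in>A. vdisjoint V x a}"

definition vlhd :: "('a, 'b) vlat_scheme \<Rightarrow> 'a \<Rightarrow> 'a \<Rightarrow> bool" where
  "vlhd V a b \<longleftrightarrow> dcompl V (dcompl V {a}) \<subseteq> dcompl V (dcompl V {b})"

definition archimedean :: "('a, 'b) vlat_scheme \<Rightarrow> bool" where
  "archimedean V \<longleftrightarrow> (\<forall>x\<in>carrier V. \<forall>y\<in>carrier V.
      le V (zero V) x \<and> (\<forall>n::nat. le V (smult V (real n) x) y) \<longrightarrow> x = zero V)"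

definition linear_op :: "('a, 'b) vlat_scheme \<Rightarrow> ('c, 'd) vlat_scheme \<Rightarrow> ('a \<Rightarrow> 'c) \<Rightarrow> bool" where
  "linear_op X Y T \<longleftrightarrow>
     (\<forall>x\<in>carrier X. T x \<in> carrier Y) \<and>
     (\<forall>x\<in>carrier X. \<forall>y\<in>carrier X. T (add X x y) = add Y (T x) (T y)) \<and>
     (\<forall>c. \<forall>x\<in>carrier X. T (smult X c x) = smult Y c (T x))"

definition disjointness_preserving ::
    "('a, 'b) vlat_scheme \<Rightarrow> ('c, 'd) vlat_scheme \<Rightarrow> ('a \<Rightarrow> 'c) \<Rightarrow> bool" where
  "disjointness_preserving X Y T \<longleftrightarrow>
     (\<forall>x\<in>carrier X. \<forall>y\<in>carrier X. vdisjoint X x y \<longrightarrow> vdisjoint Y (T x) (T y))"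

definition condition_beta ::
    "('a, 'b) vlat_scheme \<Rightarrow> ('c, 'd) vlat_scheme \<Rightarrow> ('a \<Rightarrow> 'c) \<Rightarrow> bool" where
  "condition_beta X Y T \<longleftrightarrow>
     (\<forall>a\<in>carrier X. \<forall>b\<in>carrier X. vlhd X a b \<longrightarrow> vlhd Y (T a) (T b))"

end

theory Submission
  imports Defs "HOL-Analysis.Abstract_Topology_2"
begin

text \<open>Take \<open>X = C[0,1]\<close>, \<open>Y = \<real>\<close> and \<open>T f = f 0\<close>; point evaluation preserves disjointness.
  The ramp \<open>b t = t\<close> vanishes only at \<open>0\<close>, so by continuity the only element of \<open>C[0,1]\<close>
  disjoint from \<open>b\<close> is \<open>0\<close>. Hence \<open>{b}\<^sup>d\<^sup>d = X\<close> and \<open>1 \<lhd> b\<close>, whereas \<open>T b = 0\<close>, \<open>T 1 = 1\<close>,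
  and in \<open>\<real>\<close> (as in any vector lattice) only \<open>0\<close> satisfies \<open>y \<lhd> 0\<close>.\<close>

definition pointwise_vlat :: "('a \<Rightarrow> real) set \<Rightarrow> ('a \<Rightarrow> real) vlat" where
  "pointwise_vlat C = \<lparr>carrier = C, add = (\<lambda>f g t. f t + g t), zero = (\<lambda>t. 0),
     smult = (\<lambda>c f t. c * f t), le = (\<lambda>f g. \<forall>t. f t \<le> g t)\<rparr>"

lemma pointwise_vlat_simps [simp]:
  "carrier (pointwise_vlat C) = C"
  "add (pointwise_vlat C) f g = (\<lambda>t. f t + g t)"
  "zero (pointwise_vlat C) = (\<lambda>t. 0)"
  "smult (pointwise_vlat C) c f = (\<lambda>t. c * f t)"
  "le (pointwise_vlat C) f g \<longleftrightarrow> (\<forall>t. f t \<le> g t)"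
  by (simp_all add: pointwise_vlat_def)

lemma archimedean_pointwise_vlat: "archimedean (pointwise_vlat C)"
proof (clarsimp simp: archimedean_def)
  fix x y :: "'a \<Rightarrow> real"
  assume nonneg: "\<forall>t. 0 \<le> x t" and bounded: "\<forall>n t. real n * x t \<le> y t"
  show "x = (\<lambda>t. 0)"
  proof
    fix t
    show "x t = 0"
    proof (rule ccontr)
      assume "x t \<noteq> 0"
      with nonneg have "x t > 0"
        by (simp add: order_less_le)
      then obtain n where "y t < real n * x t"
        using ex_less_of_nat_mult by blast
      with bounded show False
        by (meson not_le)
    qed
  qed
qed

locale function_lattice =
  fixes C :: "('a \<Rightarrow> real) set"
  assumes zero_closed: "(\<lambda>t. 0) \<in> C"
    and add_closed: "\<And>f g. f \<in> C \<Longrightarrow> g \<in> C \<Longrightarrow> (\<lambda>t. f t + g t) \<in> C"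
    and scale_closed: "\<And>f c. f \<in> C \<Longrightarrow> (\<lambda>t. c * f t) \<in> C"
    and max_closed: "\<And>f g. f \<in> C \<Longrightarrow> g \<in> C \<Longrightarrow> (\<lambda>t. max (f t) (g t)) \<in> C"
begin

lemma min_closed:
  assumes "f \<in> C" "g \<in> C"
  shows "(\<lambda>t. min (f t) (g t)) \<in> C"
proof -
  have "(\<lambda>t. min (f t) (g t)) = (\<lambda>t. -1 * max (-1 * f t) (-1 * g t))"
    by (auto simp: fun_eq_iff min_def max_def)
  then show ?thesis
    using assms by (simp only: scale_closed max_closed)
qed

lemma abs_closed:
  assumes "f \<in> C"
  shows "(\<lambda>t. \<bar>f t\<bar>) \<in> C"
proof -
  have "(\<lambda>t. \<bar>f t\<bar>) = (\<lambda>t. max (f t) (-1 * f t))"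
    by (auto simp: fun_eq_iff)
  then show ?thesis
    using assms by (simp only: scale_closed max_closed)
qed

lemma vector_lattice: "vector_lattice (pointwise_vlat C)"
proof -
  have "\<exists>g\<in>C. (\<lambda>t. f t + g t) = (\<lambda>t. 0)" if "f \<in> C" for f
    using scale_closed[OF that, of "-1"] by (intro bexI) auto
  moreover have "\<exists>s\<in>C. (\<forall>t. f t \<le> s t) \<and> (\<forall>t. g t \<le> s t) \<and>
      (\<forall>h\<in>C. (\<forall>t. f t \<le> h t) \<and> (\<forall>t. g t \<le> h t) \<longrightarrow> (\<forall>t. s t \<le> h t))"
    if "f \<in> C" "g \<in> C" for f g
    using max_closed[OF that] by (intro bexI) auto
  moreover have "\<exists>s\<in>C. (\<forall>t. s t \<le> f t) \<and> (\<forall>t. s t \<le> g t) \<and>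
      (\<forall>h\<in>C. (\<forall>t. h t \<le> f t) \<and> (\<forall>t. h t \<le> g t) \<longrightarrow> (\<forall>t. h t \<le> s t))"
    if "f \<in> C" "g \<in> C" for f g
    using min_closed[OF that] by (intro bexI) auto
  ultimately show ?thesis
    unfolding vector_lattice_def
    by (auto simp: zero_closed add_closed scale_closed algebra_simps fun_eq_iff
        intro: order_antisym order_trans mult_left_mono)
qed

lemma vsup_eq:
  assumes "f \<in> C" "g \<in> C"
  shows "vsup (pointwise_vlat C) f g = (\<lambda>t. max (f t) (g t))"
  unfolding vsup_def using max_closed[OF assms]
  by (intro the_equality)
    (auto simp: fun_eq_iff intro!: antisym dest!: bspec[of _ _ "\<lambda>t. max (f t) (g t)"])

lemma vinf_eq:
  assumes "f \<in> C" "g \<in> C"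
  shows "vinf (pointwise_vlat C) f g = (\<lambda>t. min (f t) (g t))"
  unfolding vinf_def using min_closed[OF assms]
  by (intro the_equality)
    (auto simp: fun_eq_iff intro!: antisym dest!: bspec[of _ _ "\<lambda>t. min (f t) (g t)"])

lemma vabs_eq: "f \<in> C \<Longrightarrow> vabs (pointwise_vlat C) f = (\<lambda>t. \<bar>f t\<bar>)"
  unfolding vabs_def using scale_closed[of f "-1"]
  by (auto simp: vsup_eq fun_eq_iff max_def)

lemma vdisjoint_iff:
  assumes "f \<in> C" "g \<in> C"
  shows "vdisjoint (pointwise_vlat C) f g \<longleftrightarrow> (\<forall>t. f t = 0 \<or> g t = 0)"
  using assms by (auto simp: vdisjoint_def vabs_eq vinf_eq abs_closed fun_eq_iff min_def)
    (metis abs_ge_zero abs_zero order_antisym)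

lemma dcompl_eq:
  assumes "A \<subseteq> C"
  shows "dcompl (pointwise_vlat C) A = {f \<in> C. \<forall>a\<in>A. \<forall>t. f t = 0 \<or> a t = 0}"
proof -
  have "vdisjoint (pointwise_vlat C) f a \<longleftrightarrow> (\<forall>t. f t = 0 \<or> a t = 0)" if "f \<in> C" "a \<in> A" for f a
    using that assms vdisjoint_iff by blast
  then show ?thesis
    by (auto simp: dcompl_def)
qed

lemma dcompl_zero: "dcompl (pointwise_vlat C) {\<lambda>t. 0} = C"
  by (simp add: dcompl_eq zero_closed)

lemma dcompl_carrier: "dcompl (pointwise_vlat C) C = {\<lambda>t. 0}"
  by (auto simp: dcompl_eq zero_closed fun_eq_iff)

lemma vlhd_zero_iff:
  assumes "f \<in> C"
  shows "vlhd (pointwise_vlat C) f (\<lambda>t. 0) \<longleftrightarrow> f = (\<lambda>t. 0)"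
proof -
  have "f \<in> dcompl (pointwise_vlat C) (dcompl (pointwise_vlat C) {f})"
    using assms by (auto simp: dcompl_eq)
  then show ?thesis
    by (auto simp: vlhd_def dcompl_zero dcompl_carrier)
qed

lemma vlhd_if_dcompl_trivial:
  assumes "dcompl (pointwise_vlat C) {g} = {\<lambda>t. 0}"
  shows "vlhd (pointwise_vlat C) f g"
proof -
  have "dcompl (pointwise_vlat C) (dcompl (pointwise_vlat C) {g}) = C"
    using assms dcompl_zero by simp
  then show ?thesis
    by (auto simp: vlhd_def dcompl_def)
qed

end

lemma linear_op_evaluation:
  assumes "\<And>f. f \<in> C \<Longrightarrow> (\<lambda>_. f s) \<in> D"
  shows "linear_op (pointwise_vlat C) (pointwise_vlat D) (\<lambda>f _. f s)"
  using assms by (simp add: linear_op_def)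

lemma disjointness_preserving_evaluation:
  assumes "function_lattice C" "function_lattice D" "\<And>f. f \<in> C \<Longrightarrow> (\<lambda>_. f s) \<in> D"
  shows "disjointness_preserving (pointwise_vlat C) (pointwise_vlat D) (\<lambda>f _. f s)"
  using assms by (simp add: disjointness_preserving_def function_lattice.vdisjoint_iff)

text \<open>\<open>C[0,1]\<close> is modelled by continuous functions on \<open>[0,1]\<close> extended by \<open>0\<close> to all of \<open>\<real>\<close>,
  and \<open>\<real>\<close> by the constant functions, to fit the carrier type \<open>real \<Rightarrow> real\<close>.\<close>

definition unit_interval_continuous :: "(real \<Rightarrow> real) set" where
  "unit_interval_continuous = {f. continuous_on {0..1} f \<and> (\<forall>t. t \<notin> {0..1} \<longrightarrow> f t = 0)}"

definition constant_functions :: "('a \<Rightarrow> real) set" where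
  "constant_functions = range (\<lambda>c _. c)"

lemma function_lattice_unit_interval_continuous: "function_lattice unit_interval_continuous"
  by unfold_locales
    (auto simp: unit_interval_continuous_def continuous_on_add continuous_on_mult_left continuous_on_max)

lemma function_lattice_constant_functions: "function_lattice constant_functions"
  by unfold_locales (auto simp: constant_functions_def)

lemma zero_extension_mem_unit_interval_continuous:
  assumes "continuous_on {0..1} g"
  shows "(\<lambda>t. if t \<in> {0..1} then g t else 0) \<in> unit_interval_continuous"
proof -
  have "continuous_on {0..1} (\<lambda>t. if t \<in> {0..1} then g t else 0)"
    by (rule continuous_on_eq[OF assms]) simp
  then show ?thesis
    by (simp add: unit_interval_continuous_def)
qed

lemma dcompl_unit_ramp:
  "dcompl (pointwise_vlat unit_interval_continuous) {\<lambda>t. if t \<in> {0..1} then t else 0} = {\<lambda>t. 0}"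
  (is "dcompl _ {?ramp} = _")
proof -
  interpret function_lattice unit_interval_continuous
    by (rule function_lattice_unit_interval_continuous)
  have vanish: "f = (\<lambda>t. 0)"
    if f: "f \<in> unit_interval_continuous" and disj: "\<forall>t. f t = 0 \<or> ?ramp t = 0" for f
  proof
    fix t
    have outside: "f s = 0" if "s \<notin> {0..1}" for s
      using f that by (simp add: unit_interval_continuous_def)
    have inside: "f s = 0" if "s \<in> {0<..1}" for s
      using disj that by auto
    have "continuous_on (closure {0<..1::real}) f"
      using f by (simp add: unit_interval_continuous_def)
    then have "f 0 = 0"
      by (rule continuous_constant_on_closure) (use inside in auto)
    show "f t = 0"
    proof (cases "t \<in> {0..1}")
      case True
      then have "t = 0 \<or> t \<in> {0<..1}"
        by auto
      with inside \<open>f 0 = 0\<close> show ?thesis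
        by blast
    qed (rule outside)
  qed
  have "?ramp \<in> unit_interval_continuous"
    by (rule zero_extension_mem_unit_interval_continuous) (rule continuous_on_id)
  then have "dcompl (pointwise_vlat unit_interval_continuous) {?ramp} =
      {f \<in> unit_interval_continuous. \<forall>t. f t = 0 \<or> ?ramp t = 0}"
    by (subst dcompl_eq) simp_all
  also have "\<dots> = {\<lambda>t. 0}"
    using vanish zero_closed by blast
  finally show ?thesis .
qed

theorem mainTheorem5:
  shows "\<exists>(X :: (real \<Rightarrow> real) vlat) (Y :: (real \<Rightarrow> real) vlat) T.
           vector_lattice X \<and> archimedean X \<and>
           vector_lattice Y \<and> archimedean Y \<and>
           linear_op X Y T \<and> disjointness_preserving X Y T \<and>
           \<not> condition_beta X Y T"
proof -
  interpret X: function_lattice unit_interval_continuous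
    by (rule function_lattice_unit_interval_continuous)
  interpret Y: function_lattice "constant_functions :: (real \<Rightarrow> real) set"
    by (rule function_lattice_constant_functions)
  let ?X = "pointwise_vlat unit_interval_continuous"
  and ?Y = "pointwise_vlat (constant_functions :: (real \<Rightarrow> real) set)"
  and ?T = "\<lambda>(f :: real \<Rightarrow> real) (_ :: real). f 0"
  and ?a = "\<lambda>t::real. if t \<in> {0..1} then 1 else 0 :: real"
  and ?b = "\<lambda>t::real. if t \<in> {0..1} then t else 0"
  have ab: "?a \<in> unit_interval_continuous" "?b \<in> unit_interval_continuous"
    by (intro zero_extension_mem_unit_interval_continuous continuous_on_const continuous_on_id)+
  have "vlhd ?X ?a ?b"
    by (rule X.vlhd_if_dcompl_trivial) (rule dcompl_unit_ramp)
  moreover have "\<not> vlhd ?Y (?T ?a) (?T ?b)"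
    using Y.vlhd_zero_iff[of "\<lambda>_. 1"] by (simp add: constant_functions_def fun_eq_iff)
  ultimately have "\<not> condition_beta ?X ?Y ?T"
    using ab by (auto simp only: condition_beta_def pointwise_vlat_simps(1))
  moreover have "linear_op ?X ?Y ?T" "disjointness_preserving ?X ?Y ?T"
    by (intro linear_op_evaluation disjointness_preserving_evaluation
        function_lattice_unit_interval_continuous function_lattice_constant_functions;
        simp add: constant_functions_def)+
  ultimately show ?thesis
    using X.vector_lattice Y.vector_lattice archimedean_pointwise_vlat
    by blast
qed

end
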